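(* Let $\alpha>0$ and $0<\beta\le\frac14$. Consider the model $Y_i=f(x_i)+V^{1/2}(x_i)\xi_i$, $i=0,\dots,n$, $x_i=i/n$, with $\xi_0,\dots,\xi_n\overset{iid}{\sim}N(0,1)$. For every $\eta\in(0,1)$ there exists $c_\eta>0$ not depending on $n$ such that for all $0<c<c_\eta$ and all $n$ sufficiently large depending only on $\eta$, $$\inf_\varphi\left\{\sup_{f\in\mathcal{H}_\alpha,\,V\in\mathcal{D}_0}P_{f,V}\{\varphi=1\}+\sup_{f\in\mathcal{H}_\alpha,\,V\in\mathcal{D}_{1,\beta}(cn^{-1/4})}P_{f,V}\{\varphi=0\}\right\}\ge1-\eta,$$ where the infimum is over all tests $\varphi$ (measurable functions of $(Y_0,\dots,Y_n)$ into $\{0,1\}$).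
   Context: $\mathcal{H}_\alpha=\mathcal{H}_\alpha(M)$: functions $g:[0,1]\to\mathbb{R}$ with $|g^{(\lfloor\alpha\rfloor)}(x)-g^{(\lfloor\alpha\rfloor)}(y)|\le M|x-y|^{\alpha-\lfloor\alpha\rfloor}$ for all $x,y$ and $\|g^{(k)}\|_\infty\le M$ for $k=0,\dots,\lfloor\alpha\rfloor$; $M$ is a fixed sufficiently large constant. $\mathcal{D}_0=\{V:[0,1]\to[0,\infty):V(x_i)=\sigma^2\ \forall i\text{ for some }0\le\sigma^2\le M\}$; $\mathcal{D}_{1,\beta}(\varepsilon)=\{V\in\mathcal{H}_\beta:V\ge0,\ \sqrt{\frac1{n+1}\sum_{i=0}^n(V(x_i)-\bar V_n)^2}\ge\varepsilon\}$, $\bar V_n=\frac1{n+1}\sum_{i=0}^nV(x_i)$. $P_{f,V}$ is the law of the data. *)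

theory Defs
  imports "HOL-Probability.Probability"
begin

definition holder_class :: "real \<Rightarrow> real \<Rightarrow> (real \<Rightarrow> real) \<Rightarrow> bool" where
  "holder_class \<alpha> M g \<longleftrightarrow>
     (let m = nat \<lfloor>\<alpha>\<rfloor> in
      \<exists>D :: nat \<Rightarrow> real \<Rightarrow> real.
        (\<forall>x\<in>{0..1}. D 0 x = g x) \<and>
        (\<forall>k<m. \<forall>x\<in>{0..1}. (D k has_real_derivative D (Suc k) x) (at x within {0..1})) \<and>
        (\<forall>k\<le>m. \<forall>x\<in>{0..1}. \<bar>D k x\<bar> \<le> M) \<and>
        (\<forall>x\<in>{0..1}. \<forall>y\<in>{0..1}. \<bar>D m x - D m y\<bar> \<le> M * \<bar>x - y\<bar> powr (\<alpha> - real m)))"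

definition design :: "nat \<Rightarrow> nat \<Rightarrow> real" where
  "design n i = real i / real n"

definition gauss :: "real \<Rightarrow> real \<Rightarrow> real measure" where
  "gauss \<mu> v = (if v = 0 then return borel \<mu> else density lborel (normal_density \<mu> (sqrt v)))"

text \<open>Law P_{f,V} of (Y_0,...,Y_n), Y_i = f(x_i) + V(x_i)^{1/2} xi_i, xi_i iid N(0,1).\<close>
definition law :: "nat \<Rightarrow> (real \<Rightarrow> real) \<Rightarrow> (real \<Rightarrow> real) \<Rightarrow> (nat \<Rightarrow> real) measure" where
  "law n f V = PiM {..n} (\<lambda>i. gauss (f (design n i)) (V (design n i)))"

definition sample_space :: "nat \<Rightarrow> (nat \<Rightarrow> real) measure" where
  "sample_space n = PiM {..n} (\<lambda>_. borel)"

definition tests :: "nat \<Rightarrow> ((nat \<Rightarrow> real) \<Rightarrow> nat) set" where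
  "tests n = {\<phi>. \<phi> \<in> sample_space n \<rightarrow>\<^sub>M count_space UNIV \<and> (\<forall>y. \<phi> y \<in> {0, 1})}"

definition D0 :: "real \<Rightarrow> nat \<Rightarrow> (real \<Rightarrow> real) set" where
  "D0 M n = {V. (\<forall>x\<in>{0..1}. V x \<ge> 0) \<and>
      (\<exists>\<sigma>2. 0 \<le> \<sigma>2 \<and> \<sigma>2 \<le> M \<and> (\<forall>i\<le>n. V (design n i) = \<sigma>2))}"

definition mean_V :: "nat \<Rightarrow> (real \<Rightarrow> real) \<Rightarrow> real" where
  "mean_V n V = (\<Sum>i\<le>n. V (design n i)) / real (n + 1)"

definition D1 :: "real \<Rightarrow> real \<Rightarrow> nat \<Rightarrow> real \<Rightarrow> (real \<Rightarrow> real) set" where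
  "D1 \<beta> M n \<epsilon> = {V. holder_class \<beta> M V \<and> (\<forall>x\<in>{0..1}. V x \<ge> 0) \<and>
      sqrt ((\<Sum>i\<le>n. (V (design n i) - mean_V n V)\<^sup>2) / real (n + 1)) \<ge> \<epsilon>}"

end

theory Submission
  imports Defs
begin

(* Le Cam's method with a mixture alternative. The null is f = 0, V = 1. The alternatives are
   f = 0 with the variances V_s that interpolate 1 + delta e_s(i) linearly between the design
   points, where delta = 2 c n^(-1/4) and e_s takes the values +-1, with opposite signs on each
   pair (x_2j, x_2j+1) of neighbouring points; s ranges over all k = (n + 1) div 2 sign choices.
   The opposite signs keep the empirical mean of V_s equal to 1, so its empirical standard
   deviation is about delta, while the interpolation makes V_s Hoelder-beta with constant about
   delta n^beta, bounded because beta <= 1/4.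
   For the centred Gaussian densities p_v of variance v,
     int p_v p_w / p_1 = (v + w - v w)^(-1/2),
   so the chi-square affinity of the uniform mixture of the P_s against P_0 factorises over the
   pairs and equals (1 - delta^4)^(-k) <= 1 + eta^2, since k delta^4 is of order c^4. A chi-square
   divergence of at most eta^2 forces P_0(reject) + average_s P_s(accept) >= 1 - eta for every
   test. *)

section \<open>Centred Gaussian product densities\<close>

lemma PiM_density_lborel:
  fixes g :: "'i \<Rightarrow> real \<Rightarrow> real"
  assumes I: "finite I" and g[measurable]: "\<And>i. g i \<in> borel_measurable borel"
    and g_nonneg: "\<And>i x. 0 \<le> g i x" and prob: "\<And>i. prob_space (density lborel (g i))"
  shows "PiM I (\<lambda>i. density lborel (g i)) = density (PiM I (\<lambda>_. lborel)) (\<lambda>x. \<Prod>i\<in>I. g i (x i))"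
proof -
  interpret P: product_sigma_finite "\<lambda>i. density lborel (g i)"
    unfolding product_sigma_finite_def using prob prob_space_imp_sigma_finite by blast
  interpret L: product_sigma_finite "\<lambda>_. lborel :: real measure" by unfold_locales
  show ?thesis
  proof (rule P.PiM_eqI[symmetric])
    fix A assume A: "\<And>i. i \<in> I \<Longrightarrow> A i \<in> sets (density lborel (g i))"
    have "emeasure (density (PiM I (\<lambda>_. lborel)) (\<lambda>x. \<Prod>i\<in>I. g i (x i))) (PiE I A)
        = (\<integral>\<^sup>+x. (\<Prod>i\<in>I. ennreal (g i (x i)) * indicator (A i) (x i)) \<partial>PiM I (\<lambda>_. lborel))"
      using A I g_nonneg
      by (subst emeasure_density)
        (auto intro!: sets_PiM_I_finite nn_integral_cong
          simp: prod.distrib prod_ennreal indicator_def space_PiM PiE_iff)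
    also have "\<dots> = (\<Prod>i\<in>I. emeasure (density lborel (g i)) (A i))"
      using A I by (subst L.product_nn_integral_prod) (auto simp: emeasure_density)
    finally show "emeasure (density (PiM I (\<lambda>_. lborel)) (\<lambda>x. \<Prod>i\<in>I. g i (x i))) (PiE I A)
        = (\<Prod>i\<in>I. emeasure (density lborel (g i)) (A i))" .
  qed (auto intro!: sets_PiM_cong I)
qed

lemma nn_integral_normal_density_ratio:
  fixes a b :: real
  assumes a: "0 < a" and b: "0 < b" and D: "0 < a + b - a * b"
  shows "(\<integral>\<^sup>+y. ennreal (normal_density 0 (sqrt a) y * normal_density 0 (sqrt b) y
            / normal_density 0 1 y) \<partial>lborel) = ennreal (1 / sqrt (a + b - a * b))"
proof -
  define D where "D = a + b - a * b"
  define v where "v = a * b / D"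
  have "0 < D" "0 < v" using a b D by (simp_all add: D_def v_def)
  have ratio: "normal_density 0 (sqrt a) y * normal_density 0 (sqrt b) y / normal_density 0 1 y
      = 1 / sqrt D * normal_density 0 (sqrt v) y" for y
  proof -
    have "normal_density 0 (sqrt a) y * normal_density 0 (sqrt b) y / normal_density 0 1 y
        = (1 / sqrt (2 * pi * a) * (1 / sqrt (2 * pi * b)) / (1 / sqrt (2 * pi)))
          * (exp (-(y\<^sup>2) / (2 * a)) * exp (-(y\<^sup>2) / (2 * b)) / exp (-(y\<^sup>2) / 2))"
      using a b by (simp add: normal_density_def)
    also have "exp (-(y\<^sup>2) / (2 * a)) * exp (-(y\<^sup>2) / (2 * b)) / exp (-(y\<^sup>2) / 2)
        = exp (-(y\<^sup>2) / (2 * v))"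
      unfolding exp_add[symmetric] exp_diff[symmetric] using a b \<open>0 < D\<close>
      by (simp add: D_def v_def field_simps)
    also have "1 / sqrt (2 * pi * a) * (1 / sqrt (2 * pi * b)) / (1 / sqrt (2 * pi))
        = 1 / sqrt D * (1 / sqrt (2 * pi * v))"
      using a b \<open>0 < D\<close> by (simp add: v_def real_sqrt_mult real_sqrt_divide field_simps)
    finally show ?thesis
      using \<open>0 < v\<close> by (simp add: normal_density_def)
  qed
  interpret N: prob_space "density lborel (normal_density 0 (sqrt v))"
    using \<open>0 < v\<close> by (intro prob_space_normal_density) simp
  have "(\<integral>\<^sup>+y. ennreal (normal_density 0 (sqrt a) y * normal_density 0 (sqrt b) y
            / normal_density 0 1 y) \<partial>lborel)
      = ennreal (1 / sqrt D) * (\<integral>\<^sup>+y. ennreal (normal_density 0 (sqrt v) y) \<partial>lborel)"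
    unfolding ratio using \<open>0 < D\<close>
    by (subst nn_integral_cmult[symmetric])
      (auto intro!: nn_integral_cong simp: ennreal_mult'[symmetric] normal_density_nonneg)
  also have "(\<integral>\<^sup>+y. ennreal (normal_density 0 (sqrt v) y) \<partial>lborel) = 1"
    using N.emeasure_space_1 by (simp add: emeasure_density)
  finally show ?thesis by (simp add: D_def)
qed

definition centered_gauss_density :: "'i set \<Rightarrow> ('i \<Rightarrow> real) \<Rightarrow> ('i \<Rightarrow> real) \<Rightarrow> real" where
  "centered_gauss_density I v x = (\<Prod>i\<in>I. normal_density 0 (sqrt (v i)) (x i))"

lemma normal_density_measurable[measurable]: "normal_density \<mu> \<sigma> \<in> borel_measurable borel"
  unfolding normal_density_def by measurable

lemma centered_gauss_density_measurable[measurable]: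
  "finite I \<Longrightarrow> centered_gauss_density I v \<in> borel_measurable (PiM I (\<lambda>_. lborel))"
  unfolding centered_gauss_density_def by measurable

lemma centered_gauss_density_nonneg: "0 \<le> centered_gauss_density I v x"
  unfolding centered_gauss_density_def by (intro prod_nonneg) (simp add: normal_density_nonneg)

lemma centered_gauss_density_pos: "(\<And>i. i \<in> I \<Longrightarrow> 0 < v i) \<Longrightarrow> 0 < centered_gauss_density I v x"
  unfolding centered_gauss_density_def by (intro prod_pos) (simp add: normal_density_pos)

lemma nn_integral_centered_gauss_density_ratio:
  assumes I: "finite I" and pos: "\<And>i. i \<in> I \<Longrightarrow> 0 < v i" "\<And>i. i \<in> I \<Longrightarrow> 0 < w i"
    "\<And>i. i \<in> I \<Longrightarrow> 0 < v i + w i - v i * w i"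
  shows "(\<integral>\<^sup>+x. ennreal (centered_gauss_density I v x * centered_gauss_density I w x
            / centered_gauss_density I (\<lambda>_. 1) x) \<partial>PiM I (\<lambda>_. lborel))
       = ennreal (\<Prod>i\<in>I. 1 / sqrt (v i + w i - v i * w i))"
proof -
  interpret L: product_sigma_finite "\<lambda>_. lborel :: real measure" by unfold_locales
  define r where "r i y = normal_density 0 (sqrt (v i)) y * normal_density 0 (sqrt (w i)) y
    / normal_density 0 1 y" for i y
  have "(\<integral>\<^sup>+x. ennreal (centered_gauss_density I v x * centered_gauss_density I w x
            / centered_gauss_density I (\<lambda>_. 1) x) \<partial>PiM I (\<lambda>_. lborel))
      = (\<integral>\<^sup>+x. (\<Prod>i\<in>I. ennreal (r i (x i))) \<partial>PiM I (\<lambda>_. lborel))"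
    unfolding centered_gauss_density_def r_def
    by (intro nn_integral_cong)
      (simp add: prod_ennreal normal_density_nonneg prod.distrib[symmetric] prod_dividef)
  also have "\<dots> = (\<Prod>i\<in>I. \<integral>\<^sup>+y. ennreal (r i y) \<partial>lborel)"
    using I unfolding r_def by (intro L.product_nn_integral_prod) auto
  also have "\<dots> = (\<Prod>i\<in>I. ennreal (1 / sqrt (v i + w i - v i * w i)))"
    using pos unfolding r_def by (intro prod.cong refl nn_integral_normal_density_ratio) auto
  also have "\<dots> = ennreal (\<Prod>i\<in>I. 1 / sqrt (v i + w i - v i * w i))"
    using pos(3) by (intro prod_ennreal) (simp add: less_imp_le)
  finally show ?thesis .
qed

lemma prob_space_gauss: "prob_space (gauss \<mu> v)"
proof (cases "v = 0")
  case False
  \<comment> \<open>\<open>sqrt v < 0\<close> when \<open>v < 0\<close>, but the density only depends on \<open>(sqrt v)\<^sup>2\<close>.\<close>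
  have "normal_density \<mu> (sqrt v) = normal_density \<mu> \<bar>sqrt v\<bar>"
    by (simp add: normal_density_def fun_eq_iff)
  then show ?thesis
    using False unfolding gauss_def by (simp add: prob_space_normal_density)
qed (simp add: gauss_def prob_space_return)

lemma prob_space_law: "prob_space (law n f V)"
  unfolding law_def by (intro prob_space_PiM prob_space_gauss)

lemma sets_law: "sets (law n f V) = sets (PiM {..n} (\<lambda>_. lborel))"
  unfolding law_def by (intro sets_PiM_cong) (simp_all add: gauss_def)

lemma law_zero_mean:
  assumes "\<And>i. i \<le> n \<Longrightarrow> 0 < V (design n i)"
  shows "law n (\<lambda>_. 0) V
       = density (PiM {..n} (\<lambda>_. lborel)) (centered_gauss_density {..n} (\<lambda>i. V (design n i)))"
proof -
  \<comment> \<open>Positive variances at all indices, so that each factor is a probability density.\<close>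
  define v where "v i = (if i \<le> n then V (design n i) else 1)" for i
  have v: "0 < v i" for i
    using assms by (simp add: v_def)
  have "law n (\<lambda>_. 0) V = PiM {..n} (\<lambda>i. density lborel (normal_density 0 (sqrt (v i))))"
    unfolding law_def gauss_def v_def using assms by (intro PiM_cong) (auto simp: less_imp_neq[symmetric])
  also have "\<dots> = density (PiM {..n} (\<lambda>_. lborel)) (centered_gauss_density {..n} v)"
    unfolding centered_gauss_density_def using v
    by (intro PiM_density_lborel) (auto simp: normal_density_nonneg intro: prob_space_normal_density)
  also have "centered_gauss_density {..n} v = centered_gauss_density {..n} (\<lambda>i. V (design n i))"
    unfolding centered_gauss_density_def v_def by (intro ext prod.cong) auto
  finally show ?thesis .
qed

section \<open>Chi-square divergence and testing affinity\<close>

lemma nn_integral_sum_square_div: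
  fixes p :: "'b \<Rightarrow> 'a \<Rightarrow> real"
  assumes S: "finite S"
    and [measurable]: "\<And>s. s \<in> S \<Longrightarrow> p s \<in> borel_measurable L" "g \<in> borel_measurable L"
    and nonneg: "\<And>s x. s \<in> S \<Longrightarrow> 0 \<le> p s x" "\<And>x. 0 \<le> g x"
  shows "(\<integral>\<^sup>+x. ennreal ((\<Sum>s\<in>S. p s x)\<^sup>2 / g x) \<partial>L)
       = (\<Sum>s\<in>S. \<Sum>s'\<in>S. \<integral>\<^sup>+x. ennreal (p s x * p s' x / g x) \<partial>L)"
proof -
  have "ennreal ((\<Sum>s\<in>S. p s x)\<^sup>2 / g x) = (\<Sum>s\<in>S. \<Sum>s'\<in>S. ennreal (p s x * p s' x / g x))" for x
    using nonneg by (simp add: power2_eq_square sum_product sum_divide_distrib sum_nonneg)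
  then show ?thesis
    using S by (simp add: nn_integral_sum)
qed

lemma nn_integral_chi_square_le:
  fixes L :: "'a measure"
  assumes [measurable]: "p \<in> borel_measurable L" "q \<in> borel_measurable L"
    and p_pos: "\<And>x. 0 < p x" and q_nonneg: "\<And>x. 0 \<le> q x"
    and int_p: "(\<integral>\<^sup>+x. p x \<partial>L) = 1" and int_q: "(\<integral>\<^sup>+x. q x \<partial>L) = 1"
    and chi: "(\<integral>\<^sup>+x. ennreal ((q x)\<^sup>2 / p x) \<partial>L) \<le> ennreal (1 + e)" and e: "0 \<le> e"
  shows "(\<integral>\<^sup>+x. ennreal ((q x - p x)\<^sup>2 / p x) \<partial>L) \<le> ennreal e"
proof -
  have "(\<integral>\<^sup>+x. ennreal ((q x - p x)\<^sup>2 / p x) \<partial>L) + 2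
      = (\<integral>\<^sup>+x. ennreal ((q x - p x)\<^sup>2 / p x) + 2 * ennreal (q x) \<partial>L)"
    using int_q by (simp add: nn_integral_add nn_integral_cmult)
  also have "\<dots> = (\<integral>\<^sup>+x. ennreal ((q x)\<^sup>2 / p x) + ennreal (p x) \<partial>L)"
  proof (rule nn_integral_cong)
    fix x
    have "ennreal ((q x - p x)\<^sup>2 / p x + 2 * q x) = ennreal ((q x)\<^sup>2 / p x + p x)"
      using p_pos[of x] by (simp add: field_simps power2_eq_square)
    then show "ennreal ((q x - p x)\<^sup>2 / p x) + 2 * ennreal (q x) = ennreal ((q x)\<^sup>2 / p x) + ennreal (p x)"
      using q_nonneg[of x] p_pos[of x] by (simp add: ennreal_mult less_imp_le)
  qed
  also have "\<dots> = (\<integral>\<^sup>+x. ennreal ((q x)\<^sup>2 / p x) \<partial>L) + 1"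
    using int_p by (simp add: nn_integral_add)
  also have "\<dots> \<le> ennreal (1 + e) + 1"
    using chi by (rule add_right_mono)
  also have "\<dots> = ennreal e + 2"
    using e by (simp add: one_add_one[symmetric] add_ac del: one_add_one)
  finally show ?thesis
    using ennreal_add_left_cancel_le[of 2] by (simp add: add.commute)
qed

lemma nn_integral_indicator_le_chi_square:
  fixes L :: "'a measure"
  assumes [measurable]: "p \<in> borel_measurable L" "q \<in> borel_measurable L" "A \<in> sets L"
    and p_pos: "\<And>x. 0 < p x" and q_nonneg: "\<And>x. 0 \<le> q x"
    and int_p: "(\<integral>\<^sup>+x. p x \<partial>L) = 1" and int_q: "(\<integral>\<^sup>+x. q x \<partial>L) = 1"
    and chi: "(\<integral>\<^sup>+x. ennreal ((q x)\<^sup>2 / p x) \<partial>L) \<le> ennreal (1 + \<eta>\<^sup>2)" and \<eta>: "0 < \<eta>"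
  shows "(\<integral>\<^sup>+x. ennreal (q x) * indicator A x \<partial>L)
       \<le> (\<integral>\<^sup>+x. ennreal (p x) * indicator A x \<partial>L) + ennreal \<eta>"
proof -
  define r where "r x = (q x - p x)\<^sup>2 / p x" for x
  have r_nonneg: "0 \<le> r x" for x
    using p_pos[of x] by (simp add: r_def)
  have [measurable]: "r \<in> borel_measurable L"
    unfolding r_def by measurable
  have "(\<integral>\<^sup>+x. ennreal (q x) * indicator A x \<partial>L)
      \<le> (\<integral>\<^sup>+x. ennreal (p x) * indicator A x + ennreal (\<eta> / 2) * ennreal (p x)
            + ennreal (1 / (2 * \<eta>)) * ennreal (r x) \<partial>L)"
  proof (rule nn_integral_mono)
    fix x
    \<comment> \<open>AM-GM: \<open>q - p \<le> \<eta> p / 2 + (q - p)\<^sup>2 / (2 \<eta> p)\<close>\<close>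
    have "0 \<le> (q x - p x - \<eta> * p x)\<^sup>2 / (2 * \<eta> * p x)"
      using \<eta> p_pos[of x] by simp
    also have "\<dots> = p x + \<eta> / 2 * p x + r x / (2 * \<eta>) - q x"
      using \<eta> p_pos[of x] by (simp add: r_def field_simps power2_eq_square)
    finally have "ennreal (q x) \<le> ennreal (p x + \<eta> / 2 * p x + 1 / (2 * \<eta>) * r x)"
      by (intro ennreal_leI) simp
    then show "ennreal (q x) * indicator A x
        \<le> ennreal (p x) * indicator A x + ennreal (\<eta> / 2) * ennreal (p x)
            + ennreal (1 / (2 * \<eta>)) * ennreal (r x)"
      using \<eta> p_pos[of x] r_nonneg[of x]
      by (cases "x \<in> A") (simp_all add: ennreal_mult[symmetric] less_imp_le)
  qed
  also have "\<dots> = (\<integral>\<^sup>+x. ennreal (p x) * indicator A x \<partial>L) + ennreal (\<eta> / 2)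
      + ennreal (1 / (2 * \<eta>)) * (\<integral>\<^sup>+x. r x \<partial>L)"
    using int_p by (simp add: nn_integral_add nn_integral_cmult)
  also have "\<dots> \<le> (\<integral>\<^sup>+x. ennreal (p x) * indicator A x \<partial>L)
      + (ennreal (\<eta> / 2) + ennreal (1 / (2 * \<eta>)) * ennreal (\<eta>\<^sup>2))"
    using nn_integral_chi_square_le[OF _ _ p_pos q_nonneg int_p int_q chi] unfolding r_def
    by (simp add: add.assoc add_left_mono mult_left_mono)
  also have "ennreal (\<eta> / 2) + ennreal (1 / (2 * \<eta>)) * ennreal (\<eta>\<^sup>2) = ennreal \<eta>"
    using \<eta> by (simp add: ennreal_mult[symmetric] ennreal_plus[symmetric] power2_eq_square del: ennreal_plus)
  finally show ?thesis .
qed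

lemma nn_integral_density_eq_measure:
  assumes "prob_space (density L f)" and [measurable]: "f \<in> borel_measurable L" "A \<in> sets L"
  shows "(\<integral>\<^sup>+x. ennreal (f x) * indicator A x \<partial>L) = ennreal (measure (density L f) A)"
proof -
  interpret prob_space "density L f" by fact
  show ?thesis
    using assms by (simp add: emeasure_density[symmetric] emeasure_eq_measure)
qed

lemma nn_integral_density_prob_space:
  assumes "prob_space (density L f)" "f \<in> borel_measurable L"
  shows "(\<integral>\<^sup>+x. ennreal (f x) \<partial>L) = 1"
  using nn_integral_density_eq_measure[OF assms sets.top] prob_space.prob_space[OF assms(1)]
  by (simp cong: nn_integral_cong)

lemma average_prob_le_chi_square:
  fixes p0 :: "'a \<Rightarrow> real" and p :: "'b \<Rightarrow> 'a \<Rightarrow> real"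
  assumes S: "finite S" "S \<noteq> {}"
    and [measurable]: "p0 \<in> borel_measurable L" "\<And>s. s \<in> S \<Longrightarrow> p s \<in> borel_measurable L"
      "A \<in> sets L"
    and p0_pos: "\<And>x. 0 < p0 x" and p_nonneg: "\<And>s x. s \<in> S \<Longrightarrow> 0 \<le> p s x"
    and prob: "prob_space (density L p0)" "\<And>s. s \<in> S \<Longrightarrow> prob_space (density L (p s))"
    and chi: "(\<integral>\<^sup>+x. ennreal (((\<Sum>s\<in>S. p s x) / card S)\<^sup>2 / p0 x) \<partial>L) \<le> ennreal (1 + \<eta>\<^sup>2)"
    and \<eta>: "0 < \<eta>"
  shows "(\<Sum>s\<in>S. measure (density L (p s)) A) / card S \<le> measure (density L p0) A + \<eta>"
proof -
  define q where "q x = (\<Sum>s\<in>S. p s x) / card S" for x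
  have q_nonneg: "0 \<le> q x" for x
    unfolding q_def using p_nonneg by (simp add: sum_nonneg)
  have [measurable]: "q \<in> borel_measurable L"
    unfolding q_def using S by measurable
  have int_q: "(\<integral>\<^sup>+x. ennreal (q x) * indicator B x \<partial>L)
      = ennreal ((\<Sum>s\<in>S. measure (density L (p s)) B) / card S)" if [measurable]: "B \<in> sets L" for B
  proof -
    have "(\<integral>\<^sup>+x. ennreal (q x) * indicator B x \<partial>L)
        = (\<integral>\<^sup>+x. ennreal (1 / card S) * (\<Sum>s\<in>S. ennreal (p s x) * indicator B x) \<partial>L)"
      unfolding q_def using p_nonneg
      by (intro nn_integral_cong) (simp add: indicator_def sum_nonneg ennreal_mult[symmetric])
    also have "\<dots> = ennreal (1 / card S) * (\<Sum>s\<in>S. ennreal (measure (density L (p s)) B))"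
      using S prob
      by (simp add: nn_integral_cmult nn_integral_sum nn_integral_density_eq_measure del: sum_mult_indicator)
    finally show ?thesis
      by (simp add: ennreal_mult[symmetric] sum_nonneg)
  qed
  have "ennreal ((\<Sum>s\<in>S. measure (density L (p s)) A) / card S)
      = (\<integral>\<^sup>+x. ennreal (q x) * indicator A x \<partial>L)"
    by (simp add: int_q)
  also have "\<dots> \<le> (\<integral>\<^sup>+x. ennreal (p0 x) * indicator A x \<partial>L) + ennreal \<eta>"
  proof (rule nn_integral_indicator_le_chi_square)
    have "measure (density L (p s)) (space L) = 1" if "s \<in> S" for s
      using prob_space.prob_space[OF prob(2)[OF that]] by simp
    then show "(\<integral>\<^sup>+x. q x \<partial>L) = 1"
      using int_q[of "space L"] S by (simp cong: nn_integral_cong)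
    show "(\<integral>\<^sup>+x. p0 x \<partial>L) = 1"
      using prob(1) by (rule nn_integral_density_prob_space) measurable
  qed (use p0_pos q_nonneg chi \<eta> in \<open>auto simp: q_def\<close>)
  also have "(\<integral>\<^sup>+x. ennreal (p0 x) * indicator A x \<partial>L) = ennreal (measure (density L p0) A)"
    using prob(1) by (simp add: nn_integral_density_eq_measure)
  finally show ?thesis
    using \<eta> by (simp add: ennreal_plus[symmetric] del: ennreal_plus)
qed

section \<open>Sign patterns on pairs of design points\<close>

lemma sum_PiE_sum_PiE_prod:
  fixes g :: "'a::finite \<Rightarrow> 'a \<Rightarrow> 'b::comm_semiring_1"
  assumes "finite I"
  shows "(\<Sum>s\<in>I \<rightarrow>\<^sub>E UNIV. \<Sum>s'\<in>I \<rightarrow>\<^sub>E UNIV. \<Prod>j\<in>I. g (s j) (s' j))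
       = (\<Sum>a\<in>UNIV. \<Sum>b\<in>UNIV. g a b) ^ card I"
proof -
  have "(\<Sum>s\<in>I \<rightarrow>\<^sub>E UNIV. \<Sum>s'\<in>I \<rightarrow>\<^sub>E UNIV. \<Prod>j\<in>I. g (s j) (s' j))
      = (\<Sum>s\<in>I \<rightarrow>\<^sub>E UNIV. \<Prod>j\<in>I. \<Sum>b\<in>UNIV. g (s j) b)"
    using assms by (intro sum.cong refl prod_sum_PiE[symmetric]) auto
  also have "\<dots> = (\<Prod>j\<in>I. \<Sum>a\<in>UNIV. \<Sum>b\<in>UNIV. g a b)"
    using assms by (intro prod_sum_PiE[symmetric]) auto
  finally show ?thesis
    by simp
qed

lemma prod_atMost_in_pairs:
  fixes g :: "nat \<Rightarrow> 'a::comm_monoid_mult"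
  assumes "2 * k \<le> Suc n" and "\<And>i. 2 * k \<le> i \<Longrightarrow> g i = 1"
  shows "(\<Prod>i\<le>n. g i) = (\<Prod>j<k. g (2 * j) * g (Suc (2 * j)))"
proof -
  have "(\<Prod>i\<le>n. g i) = (\<Prod>i<2 * k. g i)"
    using assms by (intro prod.mono_neutral_right) auto
  also have "\<dots> = (\<Prod>j<k. g (2 * j) * g (Suc (2 * j)))"
    by (induction k) (simp_all add: mult.assoc)
  finally show ?thesis .
qed

lemma sum_atMost_in_pairs:
  fixes g :: "nat \<Rightarrow> 'a::comm_monoid_add"
  assumes "2 * k \<le> Suc n" and "\<And>i. 2 * k \<le> i \<Longrightarrow> g i = 0"
  shows "(\<Sum>i\<le>n. g i) = (\<Sum>j<k. g (2 * j) + g (Suc (2 * j)))"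
proof -
  have "(\<Sum>i\<le>n. g i) = (\<Sum>i<2 * k. g i)"
    using assms by (intro sum.mono_neutral_right) auto
  also have "\<dots> = (\<Sum>j<k. g (2 * j) + g (Suc (2 * j)))"
    by (induction k) (simp_all add: add.assoc)
  finally show ?thesis .
qed

definition npairs :: "nat \<Rightarrow> nat" where
  "npairs n = Suc n div 2"

definition bool_sign :: "bool \<Rightarrow> real" where
  "bool_sign b = (if b then 1 else -1)"

definition sign_patterns :: "nat \<Rightarrow> (nat \<Rightarrow> bool) set" where
  "sign_patterns n = {..<npairs n} \<rightarrow>\<^sub>E UNIV"

text \<open>\<open>s j\<close> is the sign at design point \<open>2 j\<close> and minus the sign at \<open>2 j + 1\<close>; the last point
  gets \<open>0\<close> when \<open>n\<close> is even.\<close>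
definition paired_signs :: "nat \<Rightarrow> (nat \<Rightarrow> bool) \<Rightarrow> nat \<Rightarrow> real" where
  "paired_signs n s i = (if i < 2 * npairs n then (-1) ^ i * bool_sign (s (i div 2)) else 0)"

lemma npairs_bounds: "2 * npairs n \<le> Suc n" "n \<le> 2 * npairs n"
  unfolding npairs_def by auto

lemma finite_sign_patterns: "finite (sign_patterns n)"
  unfolding sign_patterns_def by (simp add: finite_PiE)

lemma card_sign_patterns: "card (sign_patterns n) = 2 ^ npairs n"
  unfolding sign_patterns_def by (simp add: card_PiE)

lemma bool_sign_square[simp]: "(bool_sign b)\<^sup>2 = 1"
  unfolding bool_sign_def by simp

lemma paired_signs_pair:
  assumes "j < npairs n"
  shows "paired_signs n s (2 * j) = bool_sign (s j)" "paired_signs n s (Suc (2 * j)) = - bool_sign (s j)"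
  using assms unfolding paired_signs_def by auto

lemma abs_paired_signs_le: "\<bar>paired_signs n s i\<bar> \<le> 1"
  unfolding paired_signs_def bool_sign_def by (simp add: abs_mult)

lemma sum_paired_signs: "(\<Sum>i\<le>n. paired_signs n s i) = 0"
  by (subst sum_atMost_in_pairs[OF npairs_bounds(1)])
    (auto simp: paired_signs_def paired_signs_pair intro!: sum.neutral)

lemma sum_paired_signs_square: "(\<Sum>i\<le>n. (paired_signs n s i)\<^sup>2) = 2 * npairs n"
  by (subst sum_atMost_in_pairs[OF npairs_bounds(1)])
    (auto simp: paired_signs_def paired_signs_pair)

lemma sum_sign_patterns_affinity:
  fixes \<delta> :: real
  assumes "\<bar>\<delta>\<bar> < 1"
  shows "(\<Sum>s\<in>sign_patterns n. \<Sum>s'\<in>sign_patterns n.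
            \<Prod>i\<le>n. 1 / sqrt (1 - \<delta>\<^sup>2 * (paired_signs n s i * paired_signs n s' i)))
       = (4 / (1 - \<delta> ^ 4)) ^ npairs n"
proof -
  have "\<delta>\<^sup>2 < 1"
    using assms by (simp add: abs_square_less_1)
  then have pos: "0 < 1 - \<delta>\<^sup>2 * (bool_sign b * bool_sign b')" for b b'
    by (auto simp: bool_sign_def intro: order.strict_trans2[OF _ zero_le_power2])
  have pairs: "(\<Prod>i\<le>n. 1 / sqrt (1 - \<delta>\<^sup>2 * (paired_signs n s i * paired_signs n s' i)))
      = (\<Prod>j<npairs n. 1 / (1 - \<delta>\<^sup>2 * (bool_sign (s j) * bool_sign (s' j))))" for s s'
    by (subst prod_atMost_in_pairs[OF npairs_bounds(1)])
      (auto simp: paired_signs_def paired_signs_pair real_sqrt_mult[symmetric] abs_of_pos[OF pos]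
        intro!: prod.cong)
  have "(\<Sum>b\<in>UNIV. \<Sum>b'\<in>UNIV. 1 / (1 - \<delta>\<^sup>2 * (bool_sign b * bool_sign b')))
      = 2 / (1 - \<delta>\<^sup>2) + 2 / (1 + \<delta>\<^sup>2)"
    by (simp add: UNIV_bool bool_sign_def)
  also have "\<dots> = 4 / ((1 - \<delta>\<^sup>2) * (1 + \<delta>\<^sup>2))"
    using \<open>\<delta>\<^sup>2 < 1\<close> add_pos_nonneg[OF zero_less_one zero_le_power2[of \<delta>]]
    by (simp add: field_simps)
  also have "(1 - \<delta>\<^sup>2) * (1 + \<delta>\<^sup>2) = 1 - \<delta> ^ 4"
    by (simp add: algebra_simps power4_eq_xxxx power2_eq_square)
  finally show ?thesis
    using sum_PiE_sum_PiE_prod[of "{..<npairs n}" "\<lambda>b b'. 1 / (1 - \<delta>\<^sup>2 * (bool_sign b * bool_sign b'))"]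
    unfolding pairs sign_patterns_def by simp
qed

section \<open>Piecewise linear interpolation\<close>

definition lin_interp :: "(nat \<Rightarrow> real) \<Rightarrow> real \<Rightarrow> real" where
  "lin_interp w u = (1 - frac u) * w (nat \<lfloor>u\<rfloor>) + frac u * w (Suc (nat \<lfloor>u\<rfloor>))"

lemma lin_interp_of_nat[simp]: "lin_interp w (real i) = w i"
  unfolding lin_interp_def by (simp add: frac_def)

lemma lin_interp_dist_le:
  assumes w: "\<And>i. \<bar>w i - a\<bar> \<le> d"
  shows "\<bar>lin_interp w u - a\<bar> \<le> d"
proof -
  define m where "m = nat \<lfloor>u\<rfloor>"
  have \<theta>: "0 \<le> frac u" "frac u \<le> 1"
    by (simp_all add: less_imp_le[OF frac_lt_1])
  have "\<bar>lin_interp w u - a\<bar> = \<bar>(1 - frac u) * (w m - a) + frac u * (w (Suc m) - a)\<bar>"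
    unfolding lin_interp_def m_def by (simp add: algebra_simps)
  also have "\<dots> \<le> (1 - frac u) * d + frac u * d"
    using \<theta> w[of m] w[of "Suc m"]
    by (intro order.trans[OF abs_triangle_ineq] add_mono) (simp_all add: abs_mult mult_left_mono)
  finally show ?thesis
    by (simp add: algebra_simps)
qed

lemma lin_interp_lipschitz_step:
  assumes w: "\<And>i. \<bar>w (Suc i) - w i\<bar> \<le> L" and uv: "0 \<le> u" "u \<le> v" "v \<le> u + 1"
  shows "\<bar>lin_interp w v - lin_interp w u\<bar> \<le> L * (v - u)"
proof -
  define m where "m = nat \<lfloor>u\<rfloor>"
  define m' where "m' = nat \<lfloor>v\<rfloor>"
  have u: "lin_interp w u = w m + (u - m) * (w (Suc m) - w m)" "m \<le> u" "u < m + 1"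
    using uv floor_correct[of u] unfolding lin_interp_def m_def frac_def by (simp_all add: algebra_simps)
  have v: "lin_interp w v = w m' + (v - m') * (w (Suc m') - w m')" "m' \<le> v" "v < m' + 1"
    using uv floor_correct[of v] unfolding lin_interp_def m'_def frac_def by (simp_all add: algebra_simps)
  have "m' = m \<or> m' = Suc m"
    using u(2,3) v(2,3) uv by linarith
  then show ?thesis
  proof
    assume "m' = m"
    then have "lin_interp w v - lin_interp w u = (v - u) * (w (Suc m) - w m)"
      unfolding u v by (simp add: algebra_simps)
    then show ?thesis
      using mult_left_mono[OF w[of m], of "v - u"] uv by (simp add: abs_mult mult.commute)
  next
    assume m': "m' = Suc m"
    then have "lin_interp w v - lin_interp w u
        = (v - m') * (w (Suc m') - w m') + (m' - u) * (w m' - w m)"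
      unfolding u v by (simp add: algebra_simps)
    also have "\<bar>\<dots>\<bar> \<le> (v - m') * L + (m' - u) * L"
      using w[of m'] w[of m] u v m'
      by (intro order.trans[OF abs_triangle_ineq] add_mono) (simp_all add: abs_mult mult_left_mono)
    finally show ?thesis
      by (simp add: algebra_simps)
  qed
qed

lemma min_one_le_powr:
  fixes t \<beta> :: real
  assumes "0 \<le> t" "0 < \<beta>" "\<beta> \<le> 1"
  shows "min 1 t \<le> t powr \<beta>"
proof (cases "t \<le> 1")
  case True
  then show ?thesis
    using assms powr_mono'[of \<beta> 1 t] by (cases "t = 0") auto
next
  case False
  then show ?thesis
    using assms ge_one_powr_ge_zero[of t \<beta>] by simp
qed

lemma lin_interp_holder:
  assumes w: "\<And>i. \<bar>w i - a\<bar> \<le> d" and \<beta>: "0 < \<beta>" "\<beta> \<le> 1" and xy: "0 \<le> h" "0 \<le> x" "0 \<le> y"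
  shows "\<bar>lin_interp w (h * x) - lin_interp w (h * y)\<bar> \<le> 2 * d * h powr \<beta> * \<bar>x - y\<bar> powr \<beta>"
proof -
  define u where "u = min (h * x) (h * y)"
  define v where "v = max (h * x) (h * y)"
  have uv: "0 \<le> u" "u \<le> v" "v - u = h * \<bar>x - y\<bar>"
    using xy mult_left_mono[of x y h] mult_left_mono[of y x h]
    unfolding u_def v_def by (auto simp: abs_if algebra_simps min_def max_def)
  have dist: "\<bar>lin_interp w (h * x) - lin_interp w (h * y)\<bar> = \<bar>lin_interp w v - lin_interp w u\<bar>"
    unfolding u_def v_def by (cases "h * x \<le> h * y") (auto simp: abs_minus_commute)
  have "\<bar>lin_interp w v - lin_interp w u\<bar> \<le> 2 * d"
    using lin_interp_dist_le[of w a d v, OF w] lin_interp_dist_le[of w a d u, OF w]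
    unfolding abs_le_iff by linarith
  moreover have "\<bar>lin_interp w v - lin_interp w u\<bar> \<le> 2 * d * (v - u)" if "v \<le> u + 1"
  proof (rule lin_interp_lipschitz_step)
    show "\<bar>w (Suc i) - w i\<bar> \<le> 2 * d" for i
      using w[of "Suc i"] w[of i] unfolding abs_le_iff by linarith
  qed (use uv that in auto)
  ultimately have "\<bar>lin_interp w v - lin_interp w u\<bar> \<le> 2 * d * min 1 (v - u)"
    by (cases "v \<le> u + 1") (auto simp: min_def)
  also have "\<dots> \<le> 2 * d * (v - u) powr \<beta>"
    using uv \<beta> w[of 0] by (intro mult_left_mono min_one_le_powr) auto
  finally show ?thesis
    unfolding dist uv(3) by (simp add: powr_mult xy(1) mult.assoc)
qed

section \<open>The least favourable variances\<close>

lemma holder_class_zero: "0 \<le> M \<Longrightarrow> holder_class \<alpha> M (\<lambda>_. 0)"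
  unfolding holder_class_def Let_def by (intro exI[of _ "\<lambda>_ _. 0"]) auto

lemma holder_classI_less_one:
  assumes "0 \<le> \<beta>" "\<beta> < 1" and bounded: "\<And>x. x \<in> {0..1} \<Longrightarrow> \<bar>g x\<bar> \<le> M"
    and holder: "\<And>x y. x \<in> {0..1} \<Longrightarrow> y \<in> {0..1} \<Longrightarrow> \<bar>g x - g y\<bar> \<le> M * \<bar>x - y\<bar> powr \<beta>"
  shows "holder_class \<beta> M g"
proof -
  have "nat \<lfloor>\<beta>\<rfloor> = 0"
    using assms by simp
  then show ?thesis
    unfolding holder_class_def Let_def using bounded holder by (intro exI[of _ "\<lambda>_. g"]) auto
qed

definition alt_variance :: "nat \<Rightarrow> real \<Rightarrow> (nat \<Rightarrow> bool) \<Rightarrow> real \<Rightarrow> real" where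
  "alt_variance n \<delta> s x = lin_interp (\<lambda>i. 1 + \<delta> * paired_signs n s i) (real n * x)"

lemma alt_variance_design: "0 < n \<Longrightarrow> alt_variance n \<delta> s (design n i) = 1 + \<delta> * paired_signs n s i"
  unfolding alt_variance_def design_def by simp

lemma alt_variance_dist_one: "0 \<le> \<delta> \<Longrightarrow> \<bar>alt_variance n \<delta> s x - 1\<bar> \<le> \<delta>"
  unfolding alt_variance_def
  by (rule lin_interp_dist_le) (simp add: abs_mult mult_left_le abs_paired_signs_le)

lemma mean_V_alt_variance: "0 < n \<Longrightarrow> mean_V n (alt_variance n \<delta> s) = 1"
  unfolding mean_V_def by (simp add: alt_variance_design sum.distrib sum_distrib_left[symmetric] sum_paired_signs)

lemma alt_variance_spread:
  assumes "0 < n" "0 \<le> \<delta>"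
  shows "\<delta> / 2 \<le> sqrt ((\<Sum>i\<le>n. (alt_variance n \<delta> s (design n i) - mean_V n (alt_variance n \<delta> s))\<^sup>2)
    / real (n + 1))"
proof -
  have "(\<Sum>i\<le>n. (alt_variance n \<delta> s (design n i) - mean_V n (alt_variance n \<delta> s))\<^sup>2)
      = \<delta>\<^sup>2 * (2 * npairs n)"
    using assms by (simp add: alt_variance_design mean_V_alt_variance power_mult_distrib
      sum_distrib_left[symmetric] sum_paired_signs_square)
  moreover have "real (n + 1) \<le> 8 * npairs n"
    using assms npairs_bounds(2)[of n] by linarith
  then have "(\<delta> / 2)\<^sup>2 \<le> \<delta>\<^sup>2 * (2 * npairs n) / real (n + 1)"
    using mult_left_mono[of "real (n + 1)" "8 * npairs n" "\<delta>\<^sup>2"]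
    by (simp add: field_simps power_divide)
  ultimately show ?thesis
    using assms by (intro real_le_rsqrt) simp_all
qed

lemma alt_variance_in_D1:
  assumes n: "0 < n" and \<beta>: "0 < \<beta>" "\<beta> < 1" and \<delta>: "0 \<le> \<delta>" "\<delta> \<le> 1"
    and M: "2 \<le> M" "2 * \<delta> * real n powr \<beta> \<le> M" and \<epsilon>: "\<epsilon> \<le> \<delta> / 2"
  shows "alt_variance n \<delta> s \<in> D1 \<beta> M n \<epsilon>"
proof -
  have range: "\<bar>alt_variance n \<delta> s x - 1\<bar> \<le> \<delta>" for x
    using \<delta>(1) by (rule alt_variance_dist_one)
  have "holder_class \<beta> M (alt_variance n \<delta> s)"
  proof (rule holder_classI_less_one)
    show "\<bar>alt_variance n \<delta> s x\<bar> \<le> M" for x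
      using range[of x] \<delta> M unfolding abs_le_iff by linarith
    fix x y :: real
    assume "x \<in> {0..1}" "y \<in> {0..1}"
    then have "\<bar>alt_variance n \<delta> s x - alt_variance n \<delta> s y\<bar>
        \<le> 2 * \<delta> * real n powr \<beta> * \<bar>x - y\<bar> powr \<beta>"
      unfolding alt_variance_def using \<beta>
      by (intro lin_interp_holder[where a = 1]) (simp_all add: abs_mult mult_left_le abs_paired_signs_le \<delta>)
    also have "\<dots> \<le> M * \<bar>x - y\<bar> powr \<beta>"
      using M by (intro mult_right_mono) simp_all
    finally show "\<bar>alt_variance n \<delta> s x - alt_variance n \<delta> s y\<bar> \<le> M * \<bar>x - y\<bar> powr \<beta>" .
  qed (use \<beta> in simp_all)
  moreover have "0 \<le> alt_variance n \<delta> s x" for x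
    using range[of x] \<delta> unfolding abs_le_iff by linarith
  ultimately show ?thesis
    unfolding D1_def using alt_variance_spread[OF n \<delta>(1), of s] \<epsilon> by auto
qed

lemma const_in_D0: "1 \<le> M \<Longrightarrow> (\<lambda>_. 1) \<in> D0 M n"
  unfolding D0_def by (auto intro!: exI[of _ 1])

lemma abs_mult_paired_signs_less:
  fixes \<delta> :: real
  assumes "\<bar>\<delta>\<bar> < 1"
  shows "\<bar>\<delta> * paired_signs n s i\<bar> < 1"
  using mult_left_le[OF abs_paired_signs_le[of n s i] abs_ge_zero[of \<delta>]] assms
  by (simp add: abs_mult)

lemma one_plus_mult_paired_signs_pos:
  fixes \<delta> :: real
  assumes "\<bar>\<delta>\<bar> < 1"
  shows "0 < 1 + \<delta> * paired_signs n s i"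
  using abs_mult_paired_signs_less[OF assms, of n s i] unfolding abs_less_iff by linarith

lemma paired_signs_affinity_pos:
  fixes \<delta> :: real
  assumes \<delta>: "\<bar>\<delta>\<bar> < 1"
  shows "0 < 1 - \<delta>\<^sup>2 * (paired_signs n s i * paired_signs n s' i)"
proof -
  have "\<delta>\<^sup>2 * (paired_signs n s i * paired_signs n s' i)
      \<le> \<bar>\<delta> * paired_signs n s i\<bar> * \<bar>\<delta> * paired_signs n s' i\<bar>"
    by (simp add: power2_eq_square mult_ac flip: abs_mult)
  also have "\<dots> < 1"
    using mult_strict_mono'[OF abs_mult_paired_signs_less[OF \<delta>, of n s i]
        abs_mult_paired_signs_less[OF \<delta>, of n s' i]] by simp
  finally show ?thesis
    by simp
qed

lemma chi_square_sign_mixture: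
  fixes \<delta> :: real and n :: nat
  assumes \<delta>: "\<bar>\<delta>\<bar> < 1"
  defines "p \<equiv> \<lambda>s. centered_gauss_density {..n} (\<lambda>i. 1 + \<delta> * paired_signs n s i)"
  shows "(\<integral>\<^sup>+x. ennreal (((\<Sum>s\<in>sign_patterns n. p s x) / card (sign_patterns n))\<^sup>2
            / centered_gauss_density {..n} (\<lambda>_. 1) x) \<partial>PiM {..n} (\<lambda>_. lborel))
       = ennreal ((1 / (1 - \<delta> ^ 4)) ^ npairs n)"
proof -
  let ?S = "sign_patterns n" and ?p0 = "centered_gauss_density {..n} (\<lambda>_. 1)"
  define c :: real where "c = 4 ^ npairs n"
  have c: "0 < c" "(real (card ?S))\<^sup>2 = c" "c * (1 / (1 - \<delta> ^ 4)) ^ npairs n = (4 / (1 - \<delta> ^ 4)) ^ npairs n"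
    by (simp_all add: c_def card_sign_patterns power_divide power_even_eq[symmetric] power_mult)
  have p_nonneg: "0 \<le> p s x" for s x
    by (simp add: p_def centered_gauss_density_nonneg)
  have p_measurable: "p s \<in> borel_measurable (PiM {..n} (\<lambda>_. lborel))" for s
    unfolding p_def by measurable
  have affinity: "(\<integral>\<^sup>+x. ennreal (p s x * p s' x / ?p0 x) \<partial>PiM {..n} (\<lambda>_. lborel))
      = ennreal (\<Prod>i\<le>n. 1 / sqrt (1 - \<delta>\<^sup>2 * (paired_signs n s i * paired_signs n s' i)))" for s s'
    unfolding p_def using paired_signs_affinity_pos[OF \<delta>, where s = s and s' = s']
    by (subst nn_integral_centered_gauss_density_ratio)
      (auto simp: one_plus_mult_paired_signs_pos[OF \<delta>] algebra_simps power2_eq_square)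
  have "(\<integral>\<^sup>+x. ennreal (((\<Sum>s\<in>?S. p s x) / card ?S)\<^sup>2 / ?p0 x) \<partial>PiM {..n} (\<lambda>_. lborel))
      = ennreal (1 / c) * (\<integral>\<^sup>+x. ennreal ((\<Sum>s\<in>?S. p s x)\<^sup>2 / ?p0 x) \<partial>PiM {..n} (\<lambda>_. lborel))"
    by (subst nn_integral_cmult[symmetric])
      (auto simp: c(2) less_imp_le[OF c(1)] p_def ennreal_mult'[symmetric] power_divide centered_gauss_density_nonneg
        intro!: nn_integral_cong)
  also have "\<dots> = ennreal (1 / c) * (\<Sum>s\<in>?S. \<Sum>s'\<in>?S. ennreal
      (\<Prod>i\<le>n. 1 / sqrt (1 - \<delta>\<^sup>2 * (paired_signs n s i * paired_signs n s' i))))"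
    by (subst nn_integral_sum_square_div)
      (simp_all add: finite_sign_patterns p_measurable p_nonneg centered_gauss_density_nonneg affinity)
  also have "\<dots> = ennreal (1 / c) * ennreal (\<Sum>s\<in>?S. \<Sum>s'\<in>?S.
      \<Prod>i\<le>n. 1 / sqrt (1 - \<delta>\<^sup>2 * (paired_signs n s i * paired_signs n s' i)))"
    using paired_signs_affinity_pos[OF \<delta>, THEN less_imp_le] by (simp add: prod_nonneg sum_nonneg)
  also have "\<dots> = ennreal (1 / c * (4 / (1 - \<delta> ^ 4)) ^ npairs n)"
    using \<delta> by (simp add: sum_sign_patterns_affinity ennreal_mult'[symmetric] c_def)
  also have "1 / c * (4 / (1 - \<delta> ^ 4)) ^ npairs n = (1 / (1 - \<delta> ^ 4)) ^ npairs n"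
    by (simp add: c(3)[symmetric] c_def)
  finally show ?thesis .
qed

section \<open>Minimax testing risk\<close>

lemma sign_mixture_average_prob_le:
  fixes \<delta> \<eta> :: real
  assumes n: "0 < n" and \<delta>: "\<bar>\<delta>\<bar> < 1" and chi: "(1 / (1 - \<delta> ^ 4)) ^ npairs n \<le> 1 + \<eta>\<^sup>2"
    and \<eta>: "0 < \<eta>" and A: "A \<in> sets (PiM {..n} (\<lambda>_. lborel))"
  shows "(\<Sum>s\<in>sign_patterns n. measure (law n (\<lambda>_. 0) (alt_variance n \<delta> s)) A) / card (sign_patterns n)
       \<le> measure (law n (\<lambda>_. 0) (\<lambda>_. 1)) A + \<eta>"
proof -
  have alt_law: "law n (\<lambda>_. 0) (alt_variance n \<delta> s)
      = density (PiM {..n} (\<lambda>_. lborel)) (centered_gauss_density {..n} (\<lambda>i. 1 + \<delta> * paired_signs n s i))"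
    for s using n one_plus_mult_paired_signs_pos[OF \<delta>] by (simp add: law_zero_mean alt_variance_design)
  have null_law: "law n (\<lambda>_. 0) (\<lambda>_. 1)
      = density (PiM {..n} (\<lambda>_. lborel)) (centered_gauss_density {..n} (\<lambda>_. 1))"
    by (simp add: law_zero_mean)
  have nonempty: "sign_patterns n \<noteq> {}"
    by (simp add: sign_patterns_def PiE_eq_empty_iff)
  have prob: "prob_space (law n (\<lambda>_. 0) (alt_variance n \<delta> s))" "prob_space (law n (\<lambda>_. 0) (\<lambda>_. 1))" for s
    by (simp_all add: prob_space_law)
  show ?thesis
    unfolding alt_law null_law
  proof (rule average_prob_le_chi_square)
    show "(\<integral>\<^sup>+x. ennreal (((\<Sum>s\<in>sign_patterns n.
              centered_gauss_density {..n} (\<lambda>i. 1 + \<delta> * paired_signs n s i) x)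
            / card (sign_patterns n))\<^sup>2 / centered_gauss_density {..n} (\<lambda>_. 1) x) \<partial>PiM {..n} (\<lambda>_. lborel))
        \<le> ennreal (1 + \<eta>\<^sup>2)"
      using ennreal_leI[OF chi] by (simp add: chi_square_sign_mixture[OF \<delta>] del: ennreal_plus)
  qed (use A \<eta> nonempty prob[unfolded alt_law null_law] in \<open>auto simp: finite_sign_patterns centered_gauss_density_pos
      centered_gauss_density_nonneg\<close>)
qed

definition worst_error :: "nat \<Rightarrow> ((real \<Rightarrow> real) \<times> (real \<Rightarrow> real)) set \<Rightarrow> ((nat \<Rightarrow> real) \<Rightarrow> nat) \<Rightarrow> nat \<Rightarrow> real"
  where "worst_error n H \<phi> k =
    (SUP fV\<in>H. measure (law n (fst fV) (snd fV)) {y \<in> space (law n (fst fV) (snd fV)). \<phi> y = k})"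

definition minimax_risk :: "real \<Rightarrow> real \<Rightarrow> real \<Rightarrow> nat \<Rightarrow> real \<Rightarrow> real" where
  "minimax_risk \<alpha> \<beta> M n \<epsilon> = (INF \<phi>\<in>tests n.
      worst_error n ({f. holder_class \<alpha> M f} \<times> D0 M n) \<phi> 1
    + worst_error n ({f. holder_class \<alpha> M f} \<times> D1 \<beta> M n \<epsilon>) \<phi> 0)"

lemma error_le_worst_error:
  assumes "(f, V) \<in> H"
  shows "measure (law n f V) {y \<in> space (law n f V). \<phi> y = k} \<le> worst_error n H \<phi> k"
  unfolding worst_error_def using assms
  by (intro cSUP_upper2[where x = "(f, V)"] bdd_aboveI2[where M = 1] prob_space.prob_le_1 prob_space_law) auto

lemma space_law: "space (law n f V) = space (PiM {..n} (\<lambda>_. lborel))"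
  by (rule sets_eq_imp_space_eq[OF sets_law])

lemma tests_reject_region_sets:
  assumes "\<phi> \<in> tests n"
  shows "{y \<in> space (PiM {..n} (\<lambda>_. lborel)). \<phi> y = 1} \<in> sets (PiM {..n} (\<lambda>_. lborel))"
proof -
  have sets_sample: "sets (sample_space n) = sets (PiM {..n} (\<lambda>_. lborel))"
    unfolding sample_space_def by (intro sets_PiM_cong) simp_all
  have [measurable]: "\<phi> \<in> PiM {..n} (\<lambda>_. lborel) \<rightarrow>\<^sub>M count_space UNIV"
    using assms unfolding tests_def by (simp add: measurable_cong_sets[OF sets_sample refl])
  show ?thesis
    by measurable
qed

lemma test_errors_ge:
  fixes \<delta> \<eta> :: real
  assumes M: "2 \<le> M" and n: "0 < n" and \<beta>: "0 < \<beta>" "\<beta> < 1"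
    and \<delta>: "0 \<le> \<delta>" "\<delta> < 1" "2 * \<delta> * real n powr \<beta> \<le> M" and \<epsilon>: "\<epsilon> \<le> \<delta> / 2"
    and chi: "(1 / (1 - \<delta> ^ 4)) ^ npairs n \<le> 1 + \<eta>\<^sup>2" and \<eta>: "0 < \<eta>" and \<phi>: "\<phi> \<in> tests n"
  shows "1 - \<eta> \<le> worst_error n ({f. holder_class \<alpha> M f} \<times> D0 M n) \<phi> 1
    + worst_error n ({f. holder_class \<alpha> M f} \<times> D1 \<beta> M n \<epsilon>) \<phi> 0"
proof -
  let ?S = "sign_patterns n" and ?H = "{f. holder_class \<alpha> M f}"
  define A where "A = {y \<in> space (PiM {..n} (\<lambda>_. lborel)). \<phi> y = 1}"
  have A: "A \<in> sets (PiM {..n} (\<lambda>_. lborel))"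
    unfolding A_def using \<phi> by (rule tests_reject_region_sets)
  have reject: "{y \<in> space (law n f V). \<phi> y = 1} = A" for f V
    unfolding A_def space_law ..
  have accept: "{y \<in> space (law n f V). \<phi> y = 0} = space (law n f V) - A" for f V
    using \<phi> unfolding A_def space_law tests_def by auto
  have H0: "(\<lambda>_. 0) \<in> ?H"
    using M by (simp add: holder_class_zero)
  have "measure (law n (\<lambda>_. 0) (\<lambda>_. 1)) A \<le> worst_error n (?H \<times> D0 M n) \<phi> 1"
    using error_le_worst_error[of "\<lambda>_. 0" "\<lambda>_. 1" "?H \<times> D0 M n" n \<phi> 1, unfolded reject]
      H0 const_in_D0[of M n] M by simp
  moreover have "1 - measure (law n (\<lambda>_. 0) (alt_variance n \<delta> s)) A
      \<le> worst_error n (?H \<times> D1 \<beta> M n \<epsilon>) \<phi> 0" for s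
    using error_le_worst_error[of "\<lambda>_. 0" "alt_variance n \<delta> s" "?H \<times> D1 \<beta> M n \<epsilon>" n \<phi> 0,
        unfolded accept] H0 A prob_space.prob_compl[OF prob_space_law]
      alt_variance_in_D1[OF n \<beta> \<delta>(1) less_imp_le[OF \<delta>(2)] M \<delta>(3) \<epsilon>]
    by (simp add: sets_law)
  then have "(\<Sum>s\<in>?S. 1 - measure (law n (\<lambda>_. 0) (alt_variance n \<delta> s)) A)
      \<le> card ?S * worst_error n (?H \<times> D1 \<beta> M n \<epsilon>) \<phi> 0"
    by (rule sum_bounded_above)
  then have "(\<Sum>s\<in>?S. 1 - measure (law n (\<lambda>_. 0) (alt_variance n \<delta> s)) A) / card ?S
      \<le> worst_error n (?H \<times> D1 \<beta> M n \<epsilon>) \<phi> 0"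
    by (simp add: card_sign_patterns pos_divide_le_eq mult.commute)
  moreover have "(\<Sum>s\<in>?S. measure (law n (\<lambda>_. 0) (alt_variance n \<delta> s)) A) / card ?S
      \<le> measure (law n (\<lambda>_. 0) (\<lambda>_. 1)) A + \<eta>"
    using n \<delta> chi \<eta> A by (intro sign_mixture_average_prob_le) auto
  ultimately show ?thesis
    by (simp add: sum_subtractf card_sign_patterns diff_divide_distrib)
qed

lemma minimax_risk_ge:
  fixes \<delta> \<eta> :: real
  assumes "2 \<le> M" "0 < n" "0 < \<beta>" "\<beta> < 1"
    and "0 \<le> \<delta>" "\<delta> < 1" "2 * \<delta> * real n powr \<beta> \<le> M" "\<epsilon> \<le> \<delta> / 2"
    and "(1 / (1 - \<delta> ^ 4)) ^ npairs n \<le> 1 + \<eta>\<^sup>2" "0 < \<eta>"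
  shows "1 - \<eta> \<le> minimax_risk \<alpha> \<beta> M n \<epsilon>"
  unfolding minimax_risk_def
proof (rule cINF_greatest)
  show "tests n \<noteq> {}"
    unfolding tests_def by (auto intro!: exI[of _ "\<lambda>_. 0"])
qed (rule test_errors_ge[OF assms])

lemma inverse_one_minus_power_le:
  fixes x y :: real
  assumes x: "0 \<le> x" and k: "2 * real k * x \<le> y" and y: "y \<le> 1"
  shows "(1 / (1 - x)) ^ k \<le> 1 + y"
proof (cases "k = 0")
  case True
  then show ?thesis
    using k by simp
next
  case False
  then have "2 * x \<le> 2 * real k * x"
    using x by (simp add: mult_right_mono)
  then have "x \<le> 1 / 2"
    using k y by linarith
  have "0 \<le> y"
    using x k mult_nonneg_nonneg[of "2 * real k" x] by linarith
  have "1 - y / 2 \<le> 1 - real k * x"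
    using k by simp
  also have "\<dots> \<le> (1 - x) ^ k"
    using Bernoulli_inequality[of "-x" k] \<open>x \<le> 1 / 2\<close> by simp
  finally have low: "1 - y / 2 \<le> (1 - x) ^ k" .
  have "(1 / (1 - x)) ^ k = 1 / (1 - x) ^ k"
    by (simp add: power_divide)
  also have "\<dots> \<le> 1 / (1 - y / 2)"
    using low y by (intro divide_left_mono) (auto intro!: mult_pos_pos)
  also have "\<dots> \<le> 1 + y"
    using y \<open>0 \<le> y\<close> by (simp add: field_simps power2_eq_square mult_left_le)
  finally show ?thesis .
qed

lemma perturbation_size:
  fixes c \<eta> \<beta> :: real and n :: nat
  assumes n: "1 \<le> n" and c: "0 < c" "c < \<eta> / 4" and \<eta>: "\<eta> < 1" and \<beta>: "\<beta> \<le> 1 / 4"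
  defines "\<delta> \<equiv> 2 * c * real n powr (-1/4)"
  shows "0 \<le> \<delta>" "\<delta> < 1" "2 * \<delta> * real n powr \<beta> \<le> 1" "(1 / (1 - \<delta> ^ 4)) ^ npairs n \<le> 1 + \<eta>\<^sup>2"
proof -
  have r: "0 < real n powr (-1/4)" "real n powr (-1/4) \<le> 1"
    using n ge_one_powr_ge_zero[of "real n" "1/4"] by (simp_all add: powr_minus_divide)
  show "0 \<le> \<delta>"
    using c r unfolding \<delta>_def by simp
  have "\<delta> \<le> 2 * c"
    using c r unfolding \<delta>_def by (simp add: mult_left_le)
  then show "\<delta> < 1"
    using c \<eta> by linarith
  have "2 * \<delta> * real n powr \<beta> = 4 * c * real n powr (\<beta> - 1/4)"
    unfolding \<delta>_def by (simp add: powr_diff powr_minus_divide)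
  also have "\<dots> \<le> 4 * c"
    using n c \<beta> powr_mono[of "\<beta> - 1/4" 0 "real n"] by simp
  finally show "2 * \<delta> * real n powr \<beta> \<le> 1"
    using c \<eta> by linarith
  have "\<delta> ^ 4 * real n = 16 * c ^ 4"
    using n unfolding \<delta>_def by (simp add: power_mult_distrib powr_minus_divide power_divide powr_power)
  moreover have "npairs n \<le> n"
    using n unfolding npairs_def by linarith
  ultimately have "2 * real (npairs n) * \<delta> ^ 4 \<le> 32 * c ^ 4"
    using mult_right_mono[of "real (npairs n)" n "\<delta> ^ 4"] by (simp add: mult.commute)
  also have "\<dots> \<le> 32 * (\<eta> / 4) ^ 4"
    using c by (intro mult_left_mono power_mono) simp_all
  also have "\<dots> \<le> \<eta>\<^sup>2"
    using c \<eta> mult_le_one[of \<eta> \<eta>] by (simp add: power4_eq_xxxx power2_eq_square)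
  finally show "(1 / (1 - \<delta> ^ 4)) ^ npairs n \<le> 1 + \<eta>\<^sup>2"
    using c \<eta> by (intro inverse_one_minus_power_le) (simp_all add: power_le_one)
qed

theorem proposition5p2:
  fixes \<alpha> \<beta> :: real
  assumes "\<alpha> > 0" and "0 < \<beta>" and "\<beta> \<le> 1/4"
  shows "\<exists>M0. \<forall>M\<ge>M0. \<forall>\<eta>. 0 < \<eta> \<and> \<eta> < 1 \<longrightarrow>
    (\<exists>c\<eta>>0. \<exists>N::nat. \<forall>c n. 0 < c \<and> c < c\<eta> \<and> n \<ge> N \<longrightarrow>
      (INF \<phi>\<in>tests n.
          (SUP fV\<in>{f. holder_class \<alpha> M f} \<times> D0 M n.
              measure (law n (fst fV) (snd fV)) {y \<in> space (law n (fst fV) (snd fV)). \<phi> y = 1})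
        + (SUP fV\<in>{f. holder_class \<alpha> M f} \<times> D1 \<beta> M n (c * real n powr (-1/4)).
              measure (law n (fst fV) (snd fV)) {y \<in> space (law n (fst fV) (snd fV)). \<phi> y = 0}))
      \<ge> 1 - \<eta>)"
  unfolding worst_error_def[symmetric] minimax_risk_def[symmetric]
proof (rule exI[of _ 2], intro allI impI)
  fix M \<eta> :: real
  assume M: "2 \<le> M" and \<eta>: "0 < \<eta> \<and> \<eta> < 1"
  have "1 - \<eta> \<le> minimax_risk \<alpha> \<beta> M n (c * real n powr (-1/4))"
    if "0 < c" "c < \<eta> / 4" "1 \<le> n" for c :: real and n :: nat
    using perturbation_size[of n c \<eta> \<beta>] that \<eta> assms M
    by (intro minimax_risk_ge[where \<delta> = "2 * c * real n powr (-1/4)"]) auto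
  then show "\<exists>c\<eta>>0. \<exists>N::nat. \<forall>c n. 0 < c \<and> c < c\<eta> \<and> n \<ge> N \<longrightarrow>
      minimax_risk \<alpha> \<beta> M n (c * real n powr (-1/4)) \<ge> 1 - \<eta>"
    using \<eta> by (intro exI[of _ "\<eta> / 4"] exI[of _ "1::nat"]) auto
qed

end
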